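(* $\approx$ is an equivalence relation on networks.
   Context: Setting: a graph-based calculus for wireless networks with local broadcast. Networks are built as $M,N::=G\langle\Phi\rangle \mid M\backslash c \mid M\oplus_D N$. Here $G=(|G|,\frown_G)$ is a finite undirected graph whose vertices are locations and which has no self-loops. $\Phi$ maps each location $p\in|G|$ to a sequential process. Processes are given by $P::={\bf 0}\mid c(x).P\mid \overline{c}(e).P\mid P+Q\mid {\bf if}~b~{\bf then}~P~{\bf else}~Q\mid A(\vec v)$. $M\backslash c$ restricts channel $c$. $M\oplus_D N$ composes two networks with disjoint locations, adding the edges $D\subseteq|M|\times|N|$. $|M|$ denotes the set of locations of $M$. Networks have a labelled transition semantics $M\xrightarrow{\delta}M'$ with labels $\delta::=p:\alpha\mid\tau$, where $\alpha::=cv\mid\overline{c}v$. A label $p:\alpha$ means the node at location $p$ receives, respectively broadcasts, value $v$ on channel $c$. A broadcast at $p$ is received only by nodes linked to $p$. A $\tau$ transition arises from a broadcast on a restricted channel. $M\xrightarrow{\tau^{\ast}}M'$ means $M$ reaches $M'$ by a finite, possibly empty, sequence of $\tau$-transitions. The weak transition $M\stackrel{p:\alpha}{\Longrightarrow}M'$ means that $M\xrightarrow{\tau^{\ast}}M_1\xrightarrow{p:\alpha}M_1'\xrightarrow{\tau^{\ast}}M'$ for some $M_1,M_1'$. A localized relation is a set $\mathcal{R}\subseteq{\bf Net}\times\mathcal{P}({\sf Loc}^2)\times{\bf Net}$ such that $(M,E,N)\in\mathcal{R}$ implies $E\subseteq|M|\times|N|$. It is symmetric if $(M,E,N)\in\mathcal{R}$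 implies $(N,E^{-1},M)\in\mathcal{R}$. A weak bisimulation is a symmetric localized relation $\mathcal{R}$ such that, whenever $(M,E,N)\in\mathcal{R}$, both of the following hold: - If $M\xrightarrow{\tau}M'$, then $N\xrightarrow{\tau^{\ast}}N'$ with $(M',E,N')\in\mathcal{R}$ for some $N'$. - If $M\xrightarrow{p:\alpha}M'$, then $N\stackrel{q:\alpha}{\Longrightarrow}N'$ for some $q$ with $(p,q)\in E$ and some $N'$ with $(M',E,N')\in\mathcal{R}$. $M\approx N$ (weak bisimilarity) holds iff there exist a weak bisimulation $\mathcal{R}$ and a relation $E\subseteq|M|\times|N|$ with $(M,E,N)\in\mathcal{R}$. *)

theory Defs
  imports Main
begin

text \<open>Processes are closed terms; the input prefix c(x).P is represented by a
function from values to processes (higher-order abstract syntax), output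
expressions and boolean guards are represented by their (already evaluated)
values, and a process constant A(v) is unfolded through a definition
environment Delta (A(x) = P), which is a parameter of the semantics.\<close>

datatype ('c, 'v, 'a) proc =
    PNil
  | PIn 'c "'v \<Rightarrow> ('c, 'v, 'a) proc"
  | POut 'c 'v "('c, 'v, 'a) proc"
  | PSum "('c, 'v, 'a) proc" "('c, 'v, 'a) proc"
  | PIf bool "('c, 'v, 'a) proc" "('c, 'v, 'a) proc"
  | PCall 'a "'v list"

datatype ('c, 'v) act = ARecv 'c 'v | ASend 'c 'v

type_synonym ('c, 'v, 'a) defs = "'a \<Rightarrow> 'v list \<Rightarrow> ('c, 'v, 'a) proc"

inductive pstep :: "('c, 'v, 'a) defs \<Rightarrow> ('c, 'v, 'a) proc \<Rightarrow> ('c, 'v) act \<Rightarrow> ('c, 'v, 'a) proc \<Rightarrow> bool"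
  for Delta where
  p_in:   "pstep Delta (PIn c F) (ARecv c v) (F v)"
| p_out:  "pstep Delta (POut c v P) (ASend c v) P"
| p_suml: "pstep Delta P a P' \<Longrightarrow> pstep Delta (PSum P Q) a P'"
| p_sumr: "pstep Delta Q a Q' \<Longrightarrow> pstep Delta (PSum P Q) a Q'"
| p_ift:  "pstep Delta P a P' \<Longrightarrow> pstep Delta (PIf True P Q) a P'"
| p_iff:  "pstep Delta Q a Q' \<Longrightarrow> pstep Delta (PIf False P Q) a Q'"
| p_call: "pstep Delta (Delta A vs) a P' \<Longrightarrow> pstep Delta (PCall A vs) a P'"

definition can_recv :: "('c, 'v, 'a) defs \<Rightarrow> ('c, 'v, 'a) proc \<Rightarrow> 'c \<Rightarrow> bool" where
  "can_recv Delta P c \<longleftrightarrow> (\<exists>v P'. pstep Delta P (ARecv c v) P')"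

definition precv :: "('c, 'v, 'a) defs \<Rightarrow> ('c, 'v, 'a) proc \<Rightarrow> 'c \<Rightarrow> 'v \<Rightarrow> ('c, 'v, 'a) proc \<Rightarrow> bool" where
  "precv Delta P c v P' \<longleftrightarrow>
     (if can_recv Delta P c then pstep Delta P (ARecv c v) P' else P' = P)"

type_synonym 'l graph = "'l set \<times> ('l \<times> 'l) set"

definition wf_graph :: "'l graph \<Rightarrow> bool" where
  "wf_graph G \<longleftrightarrow> finite (fst G) \<and> snd G \<subseteq> fst G \<times> fst G \<and> sym (snd G) \<and> irrefl (snd G)"

datatype ('l, 'c, 'v, 'a) net =
    Node "'l graph" "'l \<Rightarrow> ('c, 'v, 'a) proc"
  | Restr "('l, 'c, 'v, 'a) net" 'c
  | Comp "('l, 'c, 'v, 'a) net" "('l \<times> 'l) set" "('l, 'c, 'v, 'a) net"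

fun locs :: "('l, 'c, 'v, 'a) net \<Rightarrow> 'l set" where
  "locs (Node G Phi) = fst G"
| "locs (Restr M c) = locs M"
| "locs (Comp M D N) = locs M \<union> locs N"

fun wf_net :: "('l, 'c, 'v, 'a) net \<Rightarrow> bool" where
  "wf_net (Node G Phi) = wf_graph G"
| "wf_net (Restr M c) = wf_net M"
| "wf_net (Comp M D N) =
     (wf_net M \<and> wf_net N \<and> locs M \<inter> locs N = {} \<and> D \<subseteq> locs M \<times> locs N)"

datatype ('l, 'c, 'v) label = LLoc 'l "('c, 'v) act" | LTau

text \<open>A broadcast from
outside on a channel restricted in M cannot be received inside M.\<close>

inductive recv :: "('c, 'v, 'a) defs \<Rightarrow> ('l, 'c, 'v, 'a) net \<Rightarrow> 'l set \<Rightarrow> 'c \<Rightarrow> 'v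
                   \<Rightarrow> ('l, 'c, 'v, 'a) net \<Rightarrow> bool"
  for Delta where
  r_node: "(\<forall>q. if q \<in> S \<inter> fst G then precv Delta (Phi q) c v (Phi' q) else Phi' q = Phi q)
           \<Longrightarrow> recv Delta (Node G Phi) S c v (Node G Phi')"
| r_res_same: "recv Delta (Restr M c) S c v (Restr M c)"
| r_res: "d \<noteq> c \<Longrightarrow> recv Delta M S c v M' \<Longrightarrow> recv Delta (Restr M d) S c v (Restr M' d)"
| r_comp: "recv Delta M S c v M' \<Longrightarrow> recv Delta N S c v N'
           \<Longrightarrow> recv Delta (Comp M D N) S c v (Comp M' D N')"

inductive step :: "('c, 'v, 'a) defs \<Rightarrow> ('l, 'c, 'v, 'a) net \<Rightarrow> ('l, 'c, 'v) label
                   \<Rightarrow> ('l, 'c, 'v, 'a) net \<Rightarrow> bool"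
  for Delta where
  s_recv: "p \<in> fst G \<Longrightarrow> pstep Delta (Phi p) (ARecv c v) P'
           \<Longrightarrow> step Delta (Node G Phi) (LLoc p (ARecv c v)) (Node G (Phi(p := P')))"
| s_bcast: "p \<in> fst G \<Longrightarrow> pstep Delta (Phi p) (ASend c v) P'
           \<Longrightarrow> recv Delta (Node G (Phi(p := P'))) {q. (p, q) \<in> snd G} c v M'
           \<Longrightarrow> step Delta (Node G Phi) (LLoc p (ASend c v)) M'"
| s_res_tau: "step Delta M (LLoc p (ASend c v)) M' \<Longrightarrow> step Delta (Restr M c) LTau (Restr M' c)"
| s_res_pass: "step Delta M LTau M' \<Longrightarrow> step Delta (Restr M c) LTau (Restr M' c)"
| s_res_recv: "d \<noteq> c \<Longrightarrow> step Delta M (LLoc p (ARecv d v)) M'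
           \<Longrightarrow> step Delta (Restr M c) (LLoc p (ARecv d v)) (Restr M' c)"
| s_res_send: "d \<noteq> c \<Longrightarrow> step Delta M (LLoc p (ASend d v)) M'
           \<Longrightarrow> step Delta (Restr M c) (LLoc p (ASend d v)) (Restr M' c)"
| s_comp_l: "step Delta M LTau M' \<Longrightarrow> step Delta (Comp M D N) LTau (Comp M' D N)"
| s_comp_r: "step Delta N LTau N' \<Longrightarrow> step Delta (Comp M D N) LTau (Comp M D N')"
| s_comp_recv_l: "step Delta M (LLoc p (ARecv c v)) M'
           \<Longrightarrow> step Delta (Comp M D N) (LLoc p (ARecv c v)) (Comp M' D N)"
| s_comp_recv_r: "step Delta N (LLoc p (ARecv c v)) N'
           \<Longrightarrow> step Delta (Comp M D N) (LLoc p (ARecv c v)) (Comp M D N')"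
| s_comp_bc_l: "step Delta M (LLoc p (ASend c v)) M' \<Longrightarrow> recv Delta N {q. (p, q) \<in> D} c v N'
           \<Longrightarrow> step Delta (Comp M D N) (LLoc p (ASend c v)) (Comp M' D N')"
| s_comp_bc_r: "step Delta N (LLoc p (ASend c v)) N' \<Longrightarrow> recv Delta M {q. (q, p) \<in> D} c v M'
           \<Longrightarrow> step Delta (Comp M D N) (LLoc p (ASend c v)) (Comp M' D N')"

definition tau_star :: "('c, 'v, 'a) defs \<Rightarrow> ('l, 'c, 'v, 'a) net \<Rightarrow> ('l, 'c, 'v, 'a) net \<Rightarrow> bool" where
  "tau_star Delta = (\<lambda>M M'. step Delta M LTau M')\<^sup>*\<^sup>*"

definition weak_step :: "('c, 'v, 'a) defs \<Rightarrow> ('l, 'c, 'v, 'a) net \<Rightarrow> 'l \<Rightarrow> ('c, 'v) act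
                         \<Rightarrow> ('l, 'c, 'v, 'a) net \<Rightarrow> bool" where
  "weak_step Delta M p a M' \<longleftrightarrow>
     (\<exists>M1 M1'. tau_star Delta M M1 \<and> step Delta M1 (LLoc p a) M1' \<and> tau_star Delta M1' M')"

type_synonym ('l, 'c, 'v, 'a) lrel =
  "(('l, 'c, 'v, 'a) net \<times> ('l \<times> 'l) set \<times> ('l, 'c, 'v, 'a) net) set"

definition localized :: "('l, 'c, 'v, 'a) lrel \<Rightarrow> bool" where
  "localized R \<longleftrightarrow> (\<forall>M E N. (M, E, N) \<in> R \<longrightarrow> E \<subseteq> locs M \<times> locs N)"

definition lsym :: "('l, 'c, 'v, 'a) lrel \<Rightarrow> bool" where
  "lsym R \<longleftrightarrow> (\<forall>M E N. (M, E, N) \<in> R \<longrightarrow> (N, E\<inverse>, M) \<in> R)"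

definition weak_bisimulation :: "('c, 'v, 'a) defs \<Rightarrow> ('l, 'c, 'v, 'a) lrel \<Rightarrow> bool" where
  "weak_bisimulation Delta R \<longleftrightarrow> localized R \<and> lsym R \<and>
     (\<forall>M E N. (M, E, N) \<in> R \<longrightarrow>
        (\<forall>M'. step Delta M LTau M' \<longrightarrow> (\<exists>N'. tau_star Delta N N' \<and> (M', E, N') \<in> R)) \<and>
        (\<forall>p a M'. step Delta M (LLoc p a) M' \<longrightarrow>
           (\<exists>q N'. (p, q) \<in> E \<and> weak_step Delta N q a N' \<and> (M', E, N') \<in> R)))"

definition weakly_bisimilar :: "('c, 'v, 'a) defs \<Rightarrow> ('l, 'c, 'v, 'a) net \<Rightarrow> ('l, 'c, 'v, 'a) net \<Rightarrow> bool" where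
  "weakly_bisimilar Delta M N \<longleftrightarrow>
     (\<exists>R E. weak_bisimulation Delta R \<and> E \<subseteq> locs M \<times> locs N \<and> (M, E, N) \<in> R)"

end

theory Submission
  imports Defs
begin

text \<open>Reflexivity is witnessed by the identity relation (location map the diagonal) and
symmetry is built into the definition. For transitivity, compose the two bisimulations and
their location maps; a weak move of the middle network is matched by the second bisimulation
after chasing it through the leading and trailing \<open>\<tau>\<close>-steps, and adding the reversed
composite keeps the result symmetric.\<close>

lemma recv_locs: "recv Delta M S c v M' \<Longrightarrow> locs M' = locs M"
  by (induction rule: recv.induct) auto

lemma step_locs: "step Delta M l M' \<Longrightarrow> locs M' = locs M"
  by (induction rule: step.induct) (auto dest: recv_locs)

lemma step_LLoc_in_locs: "step Delta M (LLoc p a) M' \<Longrightarrow> p \<in> locs M"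
  by (induction M "LLoc p a" M' arbitrary: p a rule: step.induct) auto

lemma tau_star_refl [simp]: "tau_star Delta M M"
  unfolding tau_star_def by simp

lemma tau_star_trans: "tau_star Delta M M' \<Longrightarrow> tau_star Delta M' M'' \<Longrightarrow> tau_star Delta M M''"
  unfolding tau_star_def by (rule rtranclp_trans)

lemma step_tau_star: "step Delta M LTau M' \<Longrightarrow> tau_star Delta M M'"
  unfolding tau_star_def by auto

lemma step_weak_step: "step Delta M (LLoc p a) M' \<Longrightarrow> weak_step Delta M p a M'"
  unfolding weak_step_def using tau_star_refl by blast

lemma weak_step_tau_star_extend:
  "tau_star Delta K K1 \<Longrightarrow> weak_step Delta K1 r a K2 \<Longrightarrow> tau_star Delta K2 K'
   \<Longrightarrow> weak_step Delta K r a K'"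
  unfolding weak_step_def by (meson tau_star_trans)

lemma weak_bisimulation_tau_star:
  assumes R: "weak_bisimulation Delta R" and "tau_star Delta N N'" and "(N, F, K) \<in> R"
  shows "\<exists>K'. tau_star Delta K K' \<and> (N', F, K') \<in> R"
  using assms(2,3) unfolding tau_star_def
proof (induction rule: rtranclp_induct)
  case base
  then show ?case by (auto simp: tau_star_def)
next
  case (step N1 N2)
  then obtain K1 where "tau_star Delta K K1" "(N1, F, K1) \<in> R"
    by (auto simp: tau_star_def)
  moreover obtain K2 where "tau_star Delta K1 K2" "(N2, F, K2) \<in> R"
    using R step(2) \<open>(N1, F, K1) \<in> R\<close> unfolding weak_bisimulation_def by blast
  ultimately show ?case
    unfolding tau_star_def by (meson rtranclp_trans)
qed

lemma weak_bisimulation_weak_step: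
  assumes R: "weak_bisimulation Delta R" and "weak_step Delta N q a N'" and "(N, F, K) \<in> R"
  shows "\<exists>r K'. (q, r) \<in> F \<and> weak_step Delta K r a K' \<and> (N', F, K') \<in> R"
proof -
  obtain N1 N1' where N: "tau_star Delta N N1" "step Delta N1 (LLoc q a) N1'" "tau_star Delta N1' N'"
    using assms(2) unfolding weak_step_def by blast
  obtain K1 where K1: "tau_star Delta K K1" "(N1, F, K1) \<in> R"
    using weak_bisimulation_tau_star[OF R N(1) assms(3)] by blast
  obtain r K2 where K2: "(q, r) \<in> F" "weak_step Delta K1 r a K2" "(N1', F, K2) \<in> R"
    using R K1(2) N(2) unfolding weak_bisimulation_def by blast
  obtain K3 where K3: "tau_star Delta K2 K3" "(N', F, K3) \<in> R"
    using weak_bisimulation_tau_star[OF R N(3) K2(3)] by blast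
  show ?thesis
    using weak_step_tau_star_extend[OF K1(1) K2(2) K3(1)] K2(1) K3(2) by blast
qed

definition lrel_comp :: "('l, 'c, 'v, 'a) lrel \<Rightarrow> ('l, 'c, 'v, 'a) lrel \<Rightarrow> ('l, 'c, 'v, 'a) lrel" where
  "lrel_comp R S = {(M, E O F, K) | M E F N K. (M, E, N) \<in> R \<and> (N, F, K) \<in> S}"

lemma lrel_compI: "(M, E, N) \<in> R \<Longrightarrow> (N, F, K) \<in> S \<Longrightarrow> (M, E O F, K) \<in> lrel_comp R S"
  unfolding lrel_comp_def by blast

lemma lrel_compE:
  assumes "(M, G, K) \<in> lrel_comp R S"
  obtains E F N where "G = E O F" "(M, E, N) \<in> R" "(N, F, K) \<in> S"
  using assms unfolding lrel_comp_def by blast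

lemma localized_lrel_comp: "localized R \<Longrightarrow> localized S \<Longrightarrow> localized (lrel_comp R S)"
  unfolding localized_def lrel_comp_def by blast

lemma lrel_comp_converse:
  assumes "lsym R" "lsym S" "(M, G, K) \<in> lrel_comp R S"
  shows "(K, G\<inverse>, M) \<in> lrel_comp S R"
proof -
  obtain E F N where "G = E O F" "(M, E, N) \<in> R" "(N, F, K) \<in> S"
    using assms(3) by (rule lrel_compE)
  moreover have "(E O F)\<inverse> = F\<inverse> O E\<inverse>" by (rule converse_relcomp)
  ultimately show ?thesis
    using assms(1,2) unfolding lsym_def by (metis lrel_compI)
qed

lemma lrel_comp_tau:
  assumes R: "weak_bisimulation Delta R" and S: "weak_bisimulation Delta S"
    and "(M, G, K) \<in> lrel_comp R S" and "step Delta M LTau M'"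
  shows "\<exists>K'. tau_star Delta K K' \<and> (M', G, K') \<in> lrel_comp R S"
proof -
  obtain E F N where G: "G = E O F" "(M, E, N) \<in> R" "(N, F, K) \<in> S"
    using assms(3) by (rule lrel_compE)
  obtain N' where N': "tau_star Delta N N'" "(M', E, N') \<in> R"
    using R G(2) assms(4) unfolding weak_bisimulation_def by blast
  obtain K' where "tau_star Delta K K'" "(N', F, K') \<in> S"
    using weak_bisimulation_tau_star[OF S N'(1) G(3)] by blast
  then show ?thesis using N'(2) G(1) by (blast intro: lrel_compI)
qed

lemma lrel_comp_LLoc:
  assumes R: "weak_bisimulation Delta R" and S: "weak_bisimulation Delta S"
    and "(M, G, K) \<in> lrel_comp R S" and "step Delta M (LLoc p a) M'"
  shows "\<exists>r K'. (p, r) \<in> G \<and> weak_step Delta K r a K' \<and> (M', G, K') \<in> lrel_comp R S"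
proof -
  obtain E F N where G: "G = E O F" "(M, E, N) \<in> R" "(N, F, K) \<in> S"
    using assms(3) by (rule lrel_compE)
  obtain q N' where N': "(p, q) \<in> E" "weak_step Delta N q a N'" "(M', E, N') \<in> R"
    using R G(2) assms(4) unfolding weak_bisimulation_def by blast
  obtain r K' where "(q, r) \<in> F" "weak_step Delta K r a K'" "(N', F, K') \<in> S"
    using weak_bisimulation_weak_step[OF S N'(2) G(3)] by blast
  then show ?thesis using N'(1,3) G(1) by (blast intro: lrel_compI)
qed

lemma weak_bisimulation_lrel_comp:
  assumes R: "weak_bisimulation Delta R" and S: "weak_bisimulation Delta S"
  shows "weak_bisimulation Delta (lrel_comp R S \<union> lrel_comp S R)"
  unfolding weak_bisimulation_def
proof (intro conjI allI impI)
  have loc: "localized R" "localized S" and sym: "lsym R" "lsym S"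
    using R S unfolding weak_bisimulation_def by auto
  show "localized (lrel_comp R S \<union> lrel_comp S R)"
    using localized_lrel_comp[OF loc] localized_lrel_comp[OF loc(2,1)]
    unfolding localized_def by blast
  show "lsym (lrel_comp R S \<union> lrel_comp S R)"
    using lrel_comp_converse[OF sym] lrel_comp_converse[OF sym(2,1)]
    unfolding lsym_def by blast
next
  fix M E N M'
  assume "(M, E, N) \<in> lrel_comp R S \<union> lrel_comp S R" and "step Delta M LTau M'"
  then show "\<exists>N'. tau_star Delta N N' \<and> (M', E, N') \<in> lrel_comp R S \<union> lrel_comp S R"
    using lrel_comp_tau[OF R S] lrel_comp_tau[OF S R] by blast
next
  fix M E N p a M'
  assume "(M, E, N) \<in> lrel_comp R S \<union> lrel_comp S R" and "step Delta M (LLoc p a) M'"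
  then show "\<exists>q N'. (p, q) \<in> E \<and> weak_step Delta N q a N' \<and> (M', E, N') \<in> lrel_comp R S \<union> lrel_comp S R"
    using lrel_comp_LLoc[OF R S] lrel_comp_LLoc[OF S R] by blast
qed

definition lrel_id :: "('l, 'c, 'v, 'a) lrel" where
  "lrel_id = {(M, Id_on (locs M), M) | M. True}"

lemma lrel_id_iff: "(M, E, N) \<in> lrel_id \<longleftrightarrow> N = M \<and> E = Id_on (locs M)"
  unfolding lrel_id_def by auto

lemma weak_bisimulation_lrel_id: "weak_bisimulation Delta lrel_id"
  unfolding weak_bisimulation_def
proof (intro conjI allI impI)
  show "localized lrel_id" "lsym lrel_id"
    unfolding localized_def lsym_def lrel_id_iff by auto
next
  fix M E N M'
  assume "(M, E, N) \<in> lrel_id" and step: "step Delta M LTau M'"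
  then have "N = M" "E = Id_on (locs M')"
    using step_locs[OF step] by (simp_all add: lrel_id_iff)
  then show "\<exists>N'. tau_star Delta N N' \<and> (M', E, N') \<in> lrel_id"
    using step_tau_star[OF step] by (simp add: lrel_id_iff)
next
  fix M E N p a M'
  assume "(M, E, N) \<in> lrel_id" and step: "step Delta M (LLoc p a) M'"
  then have "N = M" "E = Id_on (locs M')" "(p, p) \<in> E"
    using step_locs[OF step] step_LLoc_in_locs[OF step] by (auto simp: lrel_id_iff)
  then show "\<exists>q N'. (p, q) \<in> E \<and> weak_step Delta N q a N' \<and> (M', E, N') \<in> lrel_id"
    using step_weak_step[OF step] by (auto simp: lrel_id_iff)
qed

lemma weakly_bisimilar_refl: "weakly_bisimilar Delta M M"
proof -
  have "(M, Id_on (locs M), M) \<in> lrel_id"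
    by (simp add: lrel_id_iff)
  then show ?thesis
    unfolding weakly_bisimilar_def using weak_bisimulation_lrel_id Id_on_subset_Times by blast
qed

lemma weakly_bisimilar_sym:
  assumes "weakly_bisimilar Delta M N"
  shows "weakly_bisimilar Delta N M"
proof -
  obtain R E where R: "weak_bisimulation Delta R" "E \<subseteq> locs M \<times> locs N" "(M, E, N) \<in> R"
    using assms unfolding weakly_bisimilar_def by blast
  then have "(N, E\<inverse>, M) \<in> R"
    unfolding weak_bisimulation_def lsym_def by blast
  moreover have "E\<inverse> \<subseteq> locs N \<times> locs M"
    using R(2) by blast
  ultimately show ?thesis
    unfolding weakly_bisimilar_def using R(1) by blast
qed

lemma weakly_bisimilar_trans:
  assumes "weakly_bisimilar Delta M N" and "weakly_bisimilar Delta N K"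
  shows "weakly_bisimilar Delta M K"
proof -
  obtain R E S F where
    R: "weak_bisimulation Delta R" "E \<subseteq> locs M \<times> locs N" "(M, E, N) \<in> R" and
    S: "weak_bisimulation Delta S" "F \<subseteq> locs N \<times> locs K" "(N, F, K) \<in> S"
    using assms unfolding weakly_bisimilar_def by blast
  have "(M, E O F, K) \<in> lrel_comp R S \<union> lrel_comp S R"
    using R(3) S(3) by (blast intro: lrel_compI)
  moreover have "E O F \<subseteq> locs M \<times> locs K"
    using R(2) S(2) by blast
  ultimately show ?thesis
    unfolding weakly_bisimilar_def using weak_bisimulation_lrel_comp[OF R(1) S(1)] by blast
qed

theorem lemma4:
  fixes Delta :: "('c, 'v, 'a) defs"
  shows "equiv {M :: ('l, 'c, 'v, 'a) net. wf_net M}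
           {(M, N). wf_net M \<and> wf_net N \<and> weakly_bisimilar Delta M N}"
proof (rule equivI)
  show "refl_on {M :: ('l, 'c, 'v, 'a) net. wf_net M}
          {(M, N). wf_net M \<and> wf_net N \<and> weakly_bisimilar Delta M N}"
    by (auto intro!: refl_onI weakly_bisimilar_refl)
  show "sym {(M :: ('l, 'c, 'v, 'a) net, N). wf_net M \<and> wf_net N \<and> weakly_bisimilar Delta M N}"
    by (auto intro!: symI weakly_bisimilar_sym)
  show "trans {(M :: ('l, 'c, 'v, 'a) net, N). wf_net M \<and> wf_net N \<and> weakly_bisimilar Delta M N}"
    by (auto intro!: transI elim: weakly_bisimilar_trans)
qed auto

end
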